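(* Let $\sigma$ be a proper partial action of a locally compact Hausdorff group $G$ on a locally compact Hausdorff space $X$. Then the closure $E_\sigma$ of $C_c(X)$ in $E_{\sigma^e}$ equals the closure in $E_{\sigma^e}$ of $E^0_\sigma:=C_c(X^e)\cap C_0(X)$.
   Context: A topological partial action $\sigma=(\{X_t\},\{\sigma_t\})$: open $X_t\subseteq X$, homeomorphisms $\sigma_t\colon X_{t^{-1}}\to X_t$, $X_e=X$, $\sigma_e=\mathrm{id}$, $\sigma_s(X_{s^{-1}}\cap X_t)=X_s\cap X_{st}$, $\sigma_s\sigma_t=\sigma_{st}$ on $X_{t^{-1}}\cap X_{t^{-1}s^{-1}}$, $\Gamma_\sigma=\{(t,x):x\in X_{t^{-1}}\}$ open and $(t,x)\mapsto\sigma_t(x)$ continuous; proper means $(t,x)\mapsto(\sigma_t(x),x)$, $\Gamma_\sigma\to X\times X$, is proper. The enveloping action $\sigma^e$ on $X^e$ is the global action with $X$ open in $X^e$, $X_t=X\cap\sigma^e_t(X)$, $\sigma_t=\sigma^e_t|_{X_{t^{-1}}}$, $X^e=\bigcup_t\sigma^e_t(X)$; for proper $\sigma$, $X^e$ is locally compact Hausdorff and $\sigma^e$ is proper. $C_0(X)$ is viewed as an ideal of $C_0(X^e)$ (extension by zero), so $C_c(X)\subseteq C_c(X^e)\cap C_0(X)$. $X/\sigma\cong X^e/\sigma^e$ denotes the orbit space. $E_{\sigma^e}$ is the completion of $C_c(X^e)$ as a left Hilbert $C_0(X/\sigma)$-module with $(fg)(x)=f([x])g(x)$ and $\langle g,h\rangle([x])=\int_G(g\bar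 h)(\sigma^e_{t^{-1}}(x))\,dt$ (Haar measure $dt$). *)

theory Defs
  imports "HOL-Analysis.Analysis"
begin

definition lch_group :: "('g::topological_space \<Rightarrow> 'g \<Rightarrow> 'g) \<Rightarrow> ('g \<Rightarrow> 'g) \<Rightarrow> 'g \<Rightarrow> bool" where
  "lch_group mul ginv e \<longleftrightarrow>
     (\<forall>a b c. mul (mul a b) c = mul a (mul b c)) \<and>
     (\<forall>a. mul e a = a \<and> mul a e = a) \<and>
     (\<forall>a. mul (ginv a) a = e \<and> mul a (ginv a) = e) \<and>
     continuous_on UNIV (\<lambda>(a, b). mul a b) \<and> continuous_on UNIV ginv \<and>
     Hausdorff_space (euclidean :: 'g topology) \<and> locally_compact_space (euclidean :: 'g topology)"

definition left_haar_measure :: "('g::topological_space \<Rightarrow> 'g \<Rightarrow> 'g) \<Rightarrow> 'g measure \<Rightarrow> bool" where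
  "left_haar_measure mul \<mu> \<longleftrightarrow>
     sets \<mu> = sets borel \<and>
     (\<forall>g A. A \<in> sets borel \<longrightarrow> emeasure \<mu> (mul g ` A) = emeasure \<mu> A) \<and>
     (\<forall>K. compact K \<longrightarrow> emeasure \<mu> K < \<infinity>) \<and>
     (\<forall>U. open U \<and> U \<noteq> {} \<longrightarrow> emeasure \<mu> U > 0) \<and>
     (\<forall>A \<in> sets borel. emeasure \<mu> A = (INF U \<in> {U. open U \<and> A \<subseteq> U}. emeasure \<mu> U)) \<and>
     (\<forall>U. open U \<longrightarrow> emeasure \<mu> U = (SUP K \<in> {K. compact K \<and> K \<subseteq> U}. emeasure \<mu> K))"

definition global_action ::
  "('g::topological_space \<Rightarrow> 'g \<Rightarrow> 'g) \<Rightarrow> 'g \<Rightarrow> ('g \<Rightarrow> 'b::topological_space \<Rightarrow> 'b) \<Rightarrow> bool" where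
  "global_action mul e act \<longleftrightarrow>
     (\<forall>x. act e x = x) \<and> (\<forall>s t x. act (mul s t) x = act s (act t x)) \<and>
     continuous_on UNIV (\<lambda>(t, x). act t x)"

text \<open>The partial action obtained by restricting a global action to an open set X:
  domains X_t = X \<inter> act t ` X, maps the restrictions of act t.\<close>
definition pdom :: "('g \<Rightarrow> 'b \<Rightarrow> 'b) \<Rightarrow> 'b set \<Rightarrow> 'g \<Rightarrow> 'b set" where
  "pdom act X t = X \<inter> act t ` X"

definition pgraph :: "('g \<Rightarrow> 'g) \<Rightarrow> ('g \<Rightarrow> 'b \<Rightarrow> 'b) \<Rightarrow> 'b set \<Rightarrow> ('g \<times> 'b) set" where
  "pgraph ginv act X = {(t, x). x \<in> pdom act X (ginv t)}"

definition proper_partial :: "('g::topological_space \<Rightarrow> 'g) \<Rightarrow> ('g \<Rightarrow> 'b::topological_space \<Rightarrow> 'b) \<Rightarrow> 'b set \<Rightarrow> bool" where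
  "proper_partial ginv act X \<longleftrightarrow>
     (\<forall>K. compact K \<and> K \<subseteq> X \<times> X \<longrightarrow>
        compact {(t, x) \<in> pgraph ginv act X. (act t x, x) \<in> K})"

definition ext_zero :: "'b set \<Rightarrow> ('b \<Rightarrow> complex) \<Rightarrow> 'b \<Rightarrow> complex" where
  "ext_zero X f y = (if y \<in> X then f y else 0)"

definition Cc_on :: "'b::topological_space set \<Rightarrow> ('b \<Rightarrow> complex) set" where
  "Cc_on X = {f. continuous_on X f \<and> (\<exists>K. compact K \<and> K \<subseteq> X \<and> (\<forall>x \<in> X - K. f x = 0))}"

definition C0_on :: "'b::topological_space set \<Rightarrow> ('b \<Rightarrow> complex) set" where
  "C0_on X = {f. continuous_on X f \<and>
     (\<forall>\<epsilon>>0. \<exists>K. compact K \<and> K \<subseteq> X \<and> (\<forall>x \<in> X - K. cmod (f x) < \<epsilon>))}"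

text \<open>The C_0(X/sigma)-valued inner product of E_{sigma^e}, evaluated at the orbit of x.\<close>
definition E_inner :: "'g measure \<Rightarrow> ('g \<Rightarrow> 'g) \<Rightarrow> ('g \<Rightarrow> 'b \<Rightarrow> 'b) \<Rightarrow>
    ('b \<Rightarrow> complex) \<Rightarrow> ('b \<Rightarrow> complex) \<Rightarrow> 'b \<Rightarrow> complex" where
  "E_inner \<mu> ginv act g h x = (\<integral>t. g (act (ginv t) x) * cnj (h (act (ginv t) x)) \<partial>\<mu>)"

definition E_norm :: "'g measure \<Rightarrow> ('g \<Rightarrow> 'g) \<Rightarrow> ('g \<Rightarrow> 'b \<Rightarrow> 'b) \<Rightarrow> ('b \<Rightarrow> complex) \<Rightarrow> real" where
  "E_norm \<mu> ginv act g = sqrt (SUP x. cmod (E_inner \<mu> ginv act g g x))"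

text \<open>Closure in E_{sigma^e} of a subset S of C_c(X^e), intersected with the dense
  subspace C_c(X^e).  For S1, S2 \<subseteq> C_c(X^e), the closures in the completion agree
  iff these relative closures agree.\<close>
definition E_closure :: "'g measure \<Rightarrow> ('g \<Rightarrow> 'g) \<Rightarrow> ('g \<Rightarrow> 'b::topological_space \<Rightarrow> 'b) \<Rightarrow>
    ('b \<Rightarrow> complex) set \<Rightarrow> ('b \<Rightarrow> complex) set" where
  "E_closure \<mu> ginv act S = {g \<in> Cc_on UNIV. \<forall>\<epsilon>>0. \<exists>f \<in> S. E_norm \<mu> ginv act (g - f) < \<epsilon>}"

end

theory Submission
  imports Defs
begin

text \<open>Functions in \<open>C\<^sub>c(X)\<close>, extended by zero, lie in \<open>C\<^sub>c(X\<^sup>e) \<inter> C\<^sub>0(X)\<close>; continuity of the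
  extension needs compact subsets of X to be closed in \<open>X\<^sup>e\<close>, which follows from properness
  since \<open>X\<^sup>e\<close> is not assumed Hausdorff. Conversely, a function f in \<open>C\<^sub>c(X\<^sup>e) \<inter> C\<^sub>0(X)\<close>
  supported in a compact L is cut off to some \<open>h \<in> C\<^sub>c(X)\<close> with \<open>|f - h| \<le> \<delta>\<close> and
  \<open>f - h\<close> supported in L. Properness bounds the Haar measure of the visiting times
  \<open>{t. \<sigma>\<^bsub>t\<inverse>\<^esub>(x) \<in> L}\<close> by some M uniformly in x, so \<open>\<parallel>f - h\<parallel>\<^sup>2 = sup\<^sub>x \<langle>f - h, f - h\<rangle>(x) \<le> \<delta>\<^sup>2 M\<close>.\<close>

lemma norm_add_sq_le:
  fixes a b :: "'a::real_normed_vector"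
  shows "(norm (a + b))\<^sup>2 \<le> 2 * (norm a)\<^sup>2 + 2 * (norm b)\<^sup>2"
proof -
  have "(norm (a + b))\<^sup>2 \<le> (norm a + norm b)\<^sup>2"
    by (simp add: norm_triangle_ineq power_mono)
  also have "\<dots> \<le> 2 * (norm a)\<^sup>2 + 2 * (norm b)\<^sup>2"
    using sum_squares_ge_zero[of "norm a - norm b" 0] by (simp add: power2_eq_square algebra_simps)
  finally show ?thesis .
qed

lemma Cc_on_subset_C0_on: "Cc_on X \<subseteq> C0_on X"
  unfolding Cc_on_def C0_on_def by fastforce

lemma Cc_on_UNIV_diff:
  assumes "a \<in> Cc_on UNIV" "b \<in> Cc_on UNIV"
  shows "a - b \<in> Cc_on UNIV"
proof -
  obtain Ka Kb where "compact Ka" "\<forall>x\<in>UNIV - Ka. a x = 0" "compact Kb" "\<forall>x\<in>UNIV - Kb. b x = 0"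
    and "continuous_on UNIV a" "continuous_on UNIV b"
    using assms unfolding Cc_on_def by blast
  then show ?thesis
    unfolding Cc_on_def fun_diff_def
    by (intro CollectI conjI continuous_on_diff exI[of _ "Ka \<union> Kb"]) auto
qed

lemma Cc_on_UNIV_E:
  assumes "k \<in> Cc_on UNIV"
  obtains L c where "continuous_on UNIV k" "compact L" "\<And>y. y \<notin> L \<Longrightarrow> k y = 0"
    "\<And>y. cmod (k y) \<le> c"
proof -
  obtain L where L: "continuous_on UNIV k" "compact L" "\<And>y. y \<notin> L \<Longrightarrow> k y = 0"
    using assms unfolding Cc_on_def by blast
  have "compact (k ` L)"
    using compact_continuous_image[OF continuous_on_subset[OF L(1) subset_UNIV] L(2)] .
  then obtain a where "\<forall>z\<in>k ` L. cmod z \<le> a"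
    using compact_imp_bounded bounded_iff by metis
  then have "cmod (k y) \<le> max a 0" for y
    using L(3)[of y] by (cases "y \<in> L") force+
  with L that show ?thesis by blast
qed

text \<open>The cutoff is \<open>f \<cdot> \<phi>(|f|)\<close> with \<open>\<phi>\<close> rising from 0 to 1 on \<open>[\<delta>/2, \<delta>]\<close>; it vanishes
  off \<open>{|f| \<ge> \<delta>/2}\<close>, which lies in a compact subset of X.\<close>

lemma C0_on_cutoff:
  fixes f :: "'b::topological_space \<Rightarrow> complex"
  assumes f: "f \<in> ext_zero X ` C0_on X" "continuous_on UNIV f" and \<delta>: "\<delta> > 0"
  obtains H where "H \<in> ext_zero X ` Cc_on X" "continuous_on UNIV H"
    "\<And>y. cmod (f y - H y) \<le> \<delta>" "\<And>y. f y = 0 \<Longrightarrow> H y = 0"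
proof -
  obtain f\<^sub>0 where f\<^sub>0: "f\<^sub>0 \<in> C0_on X" "f = ext_zero X f\<^sub>0"
    using f(1) by blast
  define \<phi> where "\<phi> r = min 1 (max 0 (2 * r / \<delta> - 1))" for r :: real
  define H where "H y = f y * complex_of_real (\<phi> (cmod (f y)))" for y
  have H_cont: "continuous_on UNIV H"
    unfolding H_def \<phi>_def using \<delta> by (intro continuous_intros f(2)) auto
  have H_zero: "H y = 0" if "cmod (f y) < \<delta> / 2" for y
  proof -
    have "2 * cmod (f y) / \<delta> - 1 < 0"
      using that \<delta> by (simp add: field_simps)
    then show ?thesis by (simp add: H_def \<phi>_def)
  qed
  have H_close: "cmod (f y - H y) \<le> \<delta>" for y
  proof -
    have "f y - H y = f y * complex_of_real (1 - \<phi> (cmod (f y)))"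
      by (simp add: H_def algebra_simps)
    moreover have "0 \<le> 1 - \<phi> (cmod (f y))"
      by (simp add: \<phi>_def)
    ultimately have "cmod (f y - H y) = cmod (f y) * (1 - \<phi> (cmod (f y)))"
      by (simp only: norm_mult norm_of_real abs_of_nonneg)
    also have "\<dots> \<le> \<delta>"
    proof (cases "cmod (f y) \<le> \<delta>")
      case True
      then show ?thesis
        by (simp add: \<phi>_def mult_left_le order_trans[OF _ True])
    next
      case False
      then have "\<phi> (cmod (f y)) = 1"
        using \<delta> by (simp add: \<phi>_def field_simps)
      then show ?thesis using \<delta> by simp
    qed
    finally show ?thesis .
  qed
  have "\<delta> / 2 > 0"
    using \<delta> by simp
  then obtain K where K: "compact K" "K \<subseteq> X" "\<forall>x\<in>X - K. cmod (f\<^sub>0 x) < \<delta> / 2"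
    using f\<^sub>0(1) unfolding C0_on_def by blast
  have "H \<in> Cc_on X"
    unfolding Cc_on_def using continuous_on_subset[OF H_cont subset_UNIV] K H_zero f\<^sub>0(2)
    by (auto simp: ext_zero_def)
  moreover have "ext_zero X H = H"
    using f\<^sub>0(2) by (auto simp: ext_zero_def H_def)
  ultimately have "H \<in> ext_zero X ` Cc_on X"
    by (metis image_eqI)
  moreover have "H y = 0" if "f y = 0" for y
    using that by (simp add: H_def)
  ultimately show ?thesis
    using that H_cont H_close by blast
qed

lemma E_closure_mono: "S\<^sub>1 \<subseteq> S\<^sub>2 \<Longrightarrow> E_closure \<mu> ginv act S\<^sub>1 \<subseteq> E_closure \<mu> ginv act S\<^sub>2"
  unfolding E_closure_def by blast

locale group_action =
  fixes mul :: "'g::topological_space \<Rightarrow> 'g \<Rightarrow> 'g" and ginv :: "'g \<Rightarrow> 'g" and e :: 'g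
    and act :: "'g \<Rightarrow> 'b::topological_space \<Rightarrow> 'b"
  assumes group: "lch_group mul ginv e"
    and action: "global_action mul e act"
begin

lemma m_assoc: "mul (mul a b) c = mul a (mul b c)"
  and l_one: "mul e a = a" and r_one: "mul a e = a"
  and l_inv: "mul (ginv a) a = e" and r_inv: "mul a (ginv a) = e"
  using group unfolding lch_group_def by blast+

lemma inv_unique: "mul x y = e \<Longrightarrow> ginv x = y"
  by (metis m_assoc l_one l_inv r_one)

lemma inv_inv: "ginv (ginv a) = a"
  by (rule inv_unique) (rule l_inv)

lemma inv_mult: "ginv (mul a b) = mul (ginv b) (ginv a)"
  by (rule inv_unique) (metis m_assoc r_one r_inv)

lemma continuous_mult: "continuous_on UNIV (\<lambda>(a, b). mul a b)"
  and continuous_inv: "continuous_on UNIV ginv"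
  and Hausdorff_group: "Hausdorff_space (euclidean :: 'g topology)"
  using group unfolding lch_group_def by blast+

lemma act_one: "act e x = x"
  and act_mult: "act (mul s t) x = act s (act t x)"
  and continuous_act: "continuous_on UNIV (\<lambda>(t, x). act t x)"
  using action unfolding global_action_def by blast+

lemma act_inv_act: "act (ginv s) (act s x) = x"
  by (metis act_one act_mult l_inv)

lemma act_act_inv: "act s (act (ginv s) x) = x"
  by (metis act_one act_mult r_inv)

lemma continuous_on_act: "continuous_on UNIV (act s)"
proof -
  have "continuous_on UNIV (\<lambda>x. (s, x))"
    by (intro continuous_intros)
  then show ?thesis
    using continuous_on_compose2[OF continuous_act] by fastforce
qed

lemma continuous_on_orbit: "continuous_on UNIV (\<lambda>t. act (ginv t) x)"
proof -
  have "continuous_on UNIV (\<lambda>t. (ginv t, x))"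
    by (intro continuous_intros continuous_on_compose2[OF continuous_inv]) auto
  then show ?thesis
    using continuous_on_compose2[OF continuous_act] by fastforce
qed

lemma continuous_on_left_mult: "continuous_on UNIV (mul s)"
proof -
  have "continuous_on UNIV (\<lambda>x. (s, x))"
    by (intro continuous_intros)
  then show ?thesis
    using continuous_on_compose2[OF continuous_mult] by fastforce
qed

lemma continuous_on_right_mult: "continuous_on UNIV (\<lambda>x. mul x s)"
proof -
  have "continuous_on UNIV (\<lambda>x. (x, s))"
    by (intro continuous_intros)
  then show ?thesis
    using continuous_on_compose2[OF continuous_mult] by fastforce
qed

lemma open_act_image: "open U \<Longrightarrow> open (act s ` U)"
proof -
  assume "open U"
  moreover have "act s ` U = act (ginv s) -` U"
    by (auto simp: act_inv_act image_iff) (metis act_act_inv)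
  ultimately show ?thesis
    using open_vimage continuous_on_act by metis
qed

lemma compact_imp_closed_group:
  assumes "compact (T::'g set)"
  shows "closed T"
proof -
  have "closedin euclidean T"
    by (rule compactin_imp_closedin[OF Hausdorff_group]) (simp add: compactin_euclidean_iff assms)
  then show ?thesis
    by (simp only: closed_closedin)
qed

end

locale proper_restricted_action = group_action mul ginv e act
  for mul :: "'g::topological_space \<Rightarrow> 'g \<Rightarrow> 'g" and ginv e
    and act :: "'g \<Rightarrow> 'b::topological_space \<Rightarrow> 'b" +
  fixes X :: "'b set"
  assumes Hausdorff_X: "Hausdorff_space (top_of_set X)"
    and locally_compact_X: "locally_compact_space (top_of_set X)"
    and open_X: "open X"
    and translates_cover: "(\<Union>t. act t ` X) = UNIV"
    and proper: "proper_partial ginv act X"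
begin

lemma in_pgraph: "x \<in> X \<Longrightarrow> act t x \<in> X \<Longrightarrow> (t, x) \<in> pgraph ginv act X"
  unfolding pgraph_def pdom_def by (auto simp: image_iff inv_inv) (metis act_inv_act)

lemma compact_pgraph_preimage:
  assumes "compact C1" "compact C2" "C1 \<subseteq> X" "C2 \<subseteq> X"
  shows "compact {(t, x) \<in> pgraph ginv act X. (act t x, x) \<in> C1 \<times> C2}"
  using proper assms compact_Times[OF assms(1,2)] unfolding proper_partial_def by blast

lemma compact_transporters:
  assumes "compact C1" "compact C2" "C1 \<subseteq> X" "C2 \<subseteq> X"
  shows "compact {v. \<exists>c\<in>C2. act v c \<in> C1}"
proof -
  have "{v. \<exists>c\<in>C2. act v c \<in> C1} = fst ` {(t, x) \<in> pgraph ginv act X. (act t x, x) \<in> C1 \<times> C2}"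
    using assms(3,4) in_pgraph by (auto simp: image_iff) blast
  then show ?thesis
    using compact_continuous_image[OF continuous_on_fst[OF continuous_on_id]
        compact_pgraph_preimage[OF assms]] by simp
qed

lemma compact_fibre:
  assumes "compact K" "compact C" "K \<subseteq> X" "C \<subseteq> X"
  shows "compact {c \<in> C. act s c \<in> K}"
proof -
  let ?Q = "{(t, x) \<in> pgraph ginv act X. (act t x, x) \<in> K \<times> C} \<inter> ({s} \<times> UNIV)"
  have "closed ({s} \<times> (UNIV :: 'b set))"
    using compact_imp_closed_group[OF compact_sing] by (intro closed_Times closed_UNIV)
  then have "compact ?Q"
    by (intro compact_Int_closed compact_pgraph_preimage assms)
  then have "compact (snd ` ?Q)"
    by (rule compact_continuous_image[rotated]) (intro continuous_intros)
  moreover have "snd ` ?Q = {c \<in> C. act s c \<in> K}"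
  proof
    show "snd ` ?Q \<subseteq> {c \<in> C. act s c \<in> K}"
      by force
    show "{c \<in> C. act s c \<in> K} \<subseteq> snd ` ?Q"
    proof
      fix c assume "c \<in> {c \<in> C. act s c \<in> K}"
      then have "(s, c) \<in> ?Q"
        using assms(3,4) in_pgraph by auto
      then show "c \<in> snd ` ?Q"
        by (rule rev_image_eqI) simp
    qed
  qed
  ultimately show ?thesis by simp
qed

lemma compact_neighbourhood:
  assumes "x \<in> X"
  obtains U C where "open U" "compact C" "x \<in> U" "U \<subseteq> C" "C \<subseteq> X"
proof -
  from locally_compact_X assms obtain U C
    where "openin (top_of_set X) U" "compactin (top_of_set X) C" "x \<in> U" "U \<subseteq> C"
    unfolding locally_compact_space_def by auto
  then show ?thesis
    using that openin_open_trans[OF _ open_X]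
    by (auto simp: compactin_subtopology compactin_euclidean_iff)
qed

text \<open>The ambient space is not assumed Hausdorff; properness makes the fibres
  \<open>{c \<in> C. act s c \<in> K}\<close> compact, hence closed, in the Hausdorff space X.\<close>

lemma compact_subset_imp_closed:
  assumes "compact K" "K \<subseteq> X"
  shows "closed K"
  unfolding closed_def
proof (subst open_subopen, intro ballI)
  fix y assume "y \<in> - K"
  obtain s x where x: "x \<in> X" "y = act s x"
    using translates_cover by blast
  obtain U C where UC: "open U" "compact C" "x \<in> U" "U \<subseteq> C" "C \<subseteq> X"
    using compact_neighbourhood[OF x(1)] by blast
  let ?B = "{c \<in> C. act s c \<in> K}"
  have "compactin (top_of_set X) ?B"
    using compact_fibre[OF assms(1) UC(2) assms(2) UC(5)] UC(5)
    by (auto simp: compactin_subtopology compactin_euclidean_iff)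
  then have "closedin (top_of_set X) ?B"
    by (rule compactin_imp_closedin[OF Hausdorff_X])
  then have "open (X - ?B)"
    using openin_open_trans[OF _ open_X] unfolding closedin_def by simp
  then have "open (act s ` (U \<inter> (X - ?B)))"
    using UC(1) by (intro open_act_image open_Int)
  moreover have "y \<in> act s ` (U \<inter> (X - ?B))" "act s ` (U \<inter> (X - ?B)) \<subseteq> - K"
    using x UC \<open>y \<in> - K\<close> by auto
  ultimately show "\<exists>T. open T \<and> y \<in> T \<and> T \<subseteq> - K" by blast
qed

lemma ext_zero_Cc_on:
  assumes "h \<in> Cc_on X"
  shows "ext_zero X h \<in> Cc_on UNIV"
proof -
  obtain K where K: "compact K" "K \<subseteq> X" "\<forall>x\<in>X - K. h x = 0" and h: "continuous_on X h"
    using assms unfolding Cc_on_def by blast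
  from h have "continuous_on X (ext_zero X h)"
    by (rule continuous_on_cong[THEN iffD1, rotated 2]) (auto simp: ext_zero_def)
  moreover have "continuous_on (- K) (ext_zero X h)"
    by (rule continuous_on_cong[THEN iffD1, of _ _ "\<lambda>_. 0", rotated 2])
       (use K in \<open>auto simp: ext_zero_def\<close>)
  ultimately have "continuous_on (X \<union> - K) (ext_zero X h)"
    using continuous_on_open_Un open_X compact_subset_imp_closed[OF K(1,2)] by (metis open_Compl)
  moreover have "X \<union> - K = UNIV"
    using K by auto
  ultimately show ?thesis
    unfolding Cc_on_def using K by (auto simp: ext_zero_def)
qed

lemma compact_covered_by_translates:
  assumes "compact L"
  obtains F where "finite F" "\<And>s C. (s, C) \<in> F \<Longrightarrow> compact C \<and> C \<subseteq> X"
    "L \<subseteq> (\<Union>(s, C)\<in>F. act s ` C)"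
proof -
  define I where "I = {(s :: 'g, U, C). open U \<and> compact C \<and> U \<subseteq> C \<and> C \<subseteq> X}"
  define f where "f = (\<lambda>(s, U, C :: 'b set). act s ` U)"
  have "L \<subseteq> (\<Union>q\<in>I. f q)"
  proof
    fix y assume "y \<in> L"
    obtain s x where x: "x \<in> X" "y = act s x"
      using translates_cover by blast
    obtain U C where "open U" "compact C" "x \<in> U" "U \<subseteq> C" "C \<subseteq> X"
      using compact_neighbourhood[OF x(1)] by blast
    then have "(s, U, C) \<in> I" "y \<in> f (s, U, C)"
      unfolding I_def f_def using x by auto
    then show "y \<in> (\<Union>q\<in>I. f q)" by blast
  qed
  moreover have "open (f q)" if "q \<in> I" for q
    using that unfolding I_def f_def by (auto intro: open_act_image)
  ultimately obtain I' where I': "I' \<subseteq> I" "finite I'" "L \<subseteq> (\<Union>q\<in>I'. f q)"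
    using compactE_image[OF assms] by blast
  define F where "F = (\<lambda>(s, U, C). (s, C)) ` I'"
  show ?thesis
  proof
    show "finite F"
      unfolding F_def using I'(2) by simp
    show "compact C \<and> C \<subseteq> X" if "(s, C) \<in> F" for s C
      using that I'(1) unfolding F_def I_def by auto
    show "L \<subseteq> (\<Union>(s, C)\<in>F. act s ` C)"
    proof
      fix y assume "y \<in> L"
      then obtain s U C where q: "(s, U, C) \<in> I'" "y \<in> act s ` U"
        using I'(3) unfolding f_def by auto
      have "(s, C) \<in> F"
        unfolding F_def by (rule rev_image_eqI[OF q(1)]) simp
      moreover have "y \<in> act s ` C"
        using q I'(1) unfolding I_def by auto
      ultimately show "y \<in> (\<Union>(s, C)\<in>F. act s ` C)" by blast
    qed
  qed
qed

text \<open>Cover L by finitely many translates of compact subsets of X and apply properness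
  to each pair of them.\<close>

lemma relatively_compact_return_set:
  assumes "compact L"
  obtains W where "compact W" "{w. \<exists>l\<in>L. act w l \<in> L} \<subseteq> W"
proof -
  obtain F where F: "finite F" "\<And>s C. (s, C) \<in> F \<Longrightarrow> compact C \<and> C \<subseteq> X"
    "L \<subseteq> (\<Union>(s, C)\<in>F. act s ` C)"
    using compact_covered_by_translates[OF assms] by blast
  define W where "W = (\<Union>p\<in>F. \<Union>q\<in>F.
    (\<lambda>v. mul (fst p) (mul v (ginv (fst q)))) ` {v. \<exists>c\<in>snd q. act v c \<in> snd p})"
  show ?thesis
  proof
    show "compact W"
      unfolding W_def
    proof (intro compact_UN F(1))
      fix p q assume "p \<in> F" "q \<in> F"
      then have "compact {v. \<exists>c\<in>snd q. act v c \<in> snd p}"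
        using F(2) by (intro compact_transporters) (metis prod.collapse)+
      moreover have "continuous_on UNIV (\<lambda>v. mul (fst p) (mul v (ginv (fst q))))"
        by (intro continuous_on_compose2[OF continuous_on_left_mult _ subset_UNIV]
            continuous_on_right_mult)
      ultimately show "compact ((\<lambda>v. mul (fst p) (mul v (ginv (fst q)))) `
          {v. \<exists>c\<in>snd q. act v c \<in> snd p})"
        using compact_continuous_image continuous_on_subset by blast
    qed
    show "{w. \<exists>l\<in>L. act w l \<in> L} \<subseteq> W"
    proof clarify
      fix w l assume l: "l \<in> L" "act w l \<in> L"
      obtain r D d where rD: "(r, D) \<in> F" "d \<in> D" "l = act r d"
        using F(3) l(1) by blast
      obtain s C c where sC: "(s, C) \<in> F" "c \<in> C" "act w l = act s c"
        using F(3) l(2) by blast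
      define v where "v = mul (ginv s) (mul w r)"
      have "act v d = c"
        unfolding v_def using sC(3) rD(3) by (simp add: act_mult act_inv_act)
      then have "v \<in> {v. \<exists>c\<in>snd (r, D). act v c \<in> snd (s, C)}"
        using rD(2) sC(2) by auto
      moreover have "w = mul (fst (s, C)) (mul v (ginv (fst (r, D))))"
        unfolding v_def by (simp add: m_assoc[symmetric] r_inv l_one) (simp add: m_assoc r_inv r_one)
      ultimately show "w \<in> W"
        unfolding W_def by (intro UN_I[OF sC(1)] UN_I[OF rD(1)] rev_image_eqI)
    qed
  qed
qed

end

locale proper_restricted_action_haar = proper_restricted_action mul ginv e act X
  for mul :: "'g::topological_space \<Rightarrow> 'g \<Rightarrow> 'g" and ginv e
    and act :: "'g \<Rightarrow> 'b::topological_space \<Rightarrow> 'b" and X +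
  fixes \<mu> :: "'g measure"
  assumes haar: "left_haar_measure mul \<mu>"
begin

lemma sets_haar: "sets \<mu> = sets borel"
  and haar_left_invariant: "A \<in> sets borel \<Longrightarrow> emeasure \<mu> (mul g ` A) = emeasure \<mu> A"
  and haar_compact_finite: "compact K \<Longrightarrow> emeasure \<mu> K < \<infinity>"
  using haar unfolding left_haar_measure_def by simp_all

lemma compact_sets_haar: "compact T \<Longrightarrow> T \<in> sets \<mu>"
  using sets_haar compact_imp_closed_group by auto

lemma measure_left_translate: "compact T \<Longrightarrow> measure \<mu> (mul s ` T) = measure \<mu> T"
  using haar_left_invariant[of T s] compact_sets_haar sets_haar unfolding measure_def by auto

definition visiting_time_bound :: "'b set \<Rightarrow> real \<Rightarrow> bool" where
  "visiting_time_bound L M \<longleftrightarrow>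
     (\<forall>x. \<exists>T. compact T \<and> {t. act (ginv t) x \<in> L} \<subseteq> T \<and> measure \<mu> T \<le> M)"

text \<open>If \<open>t\<^sub>0\<close> is one visiting time, all others lie in \<open>t\<^sub>0 \<cdot> W\<inverse>\<close> with W the return
  set of L, whose Haar measure does not depend on the orbit.\<close>

lemma visiting_time_bound_exists:
  assumes "compact L"
  obtains M where "M \<ge> 0" "visiting_time_bound L M"
proof -
  obtain W where W: "compact W" "{w. \<exists>l\<in>L. act w l \<in> L} \<subseteq> W"
    using relatively_compact_return_set[OF assms] by blast
  have compact_inv_W: "compact (ginv ` W)"
    using compact_continuous_image[OF continuous_on_subset[OF continuous_inv subset_UNIV] W(1)] .
  have "\<exists>T. compact T \<and> {t. act (ginv t) x \<in> L} \<subseteq> T \<and> measure \<mu> T \<le> measure \<mu> (ginv ` W)" for x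
  proof (cases "\<exists>t\<^sub>0. act (ginv t\<^sub>0) x \<in> L")
    case False
    then show ?thesis
      by (intro exI[of _ "{}"]) auto
  next
    case True
    then obtain t\<^sub>0 where t\<^sub>0: "act (ginv t\<^sub>0) x \<in> L" by blast
    have "{t. act (ginv t) x \<in> L} \<subseteq> mul t\<^sub>0 ` ginv ` W"
    proof clarify
      fix t assume t: "act (ginv t) x \<in> L"
      have "act (mul (ginv t) t\<^sub>0) (act (ginv t\<^sub>0) x) = act (ginv t) x"
        by (simp add: act_mult act_act_inv)
      then have "mul (ginv t) t\<^sub>0 \<in> W"
        using W(2) t t\<^sub>0 by force
      moreover have "t = mul t\<^sub>0 (ginv (mul (ginv t) t\<^sub>0))"
        by (simp add: inv_mult inv_inv m_assoc[symmetric] r_inv l_one)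
      ultimately show "t \<in> mul t\<^sub>0 ` ginv ` W" by blast
    qed
    moreover have "compact (mul t\<^sub>0 ` ginv ` W)"
      using compact_continuous_image[OF continuous_on_subset[OF continuous_on_left_mult subset_UNIV]
          compact_inv_W] .
    ultimately show ?thesis
      using measure_left_translate[OF compact_inv_W] by (intro exI[of _ "mul t\<^sub>0 ` ginv ` W"]) auto
  qed
  then show ?thesis
    using that[of "measure \<mu> (ginv ` W)"] unfolding visiting_time_bound_def by auto
qed

definition inner_self :: "('b \<Rightarrow> complex) \<Rightarrow> 'b \<Rightarrow> real" where
  "inner_self k x = (\<integral>t. (cmod (k (act (ginv t) x)))\<^sup>2 \<partial>\<mu>)"

lemma inner_self_nonneg: "0 \<le> inner_self k x"
  unfolding inner_self_def by (rule Bochner_Integration.integral_nonneg) simp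

lemma norm_E_inner_self: "cmod (E_inner \<mu> ginv act k k x) = inner_self k x"
proof -
  have "E_inner \<mu> ginv act k k x = (\<integral>t. complex_of_real ((cmod (k (act (ginv t) x)))\<^sup>2) \<partial>\<mu>)"
    unfolding E_inner_def complex_norm_square ..
  also have "\<dots> = complex_of_real (inner_self k x)"
    unfolding inner_self_def by (rule integral_complex_of_real)
  finally show ?thesis
    using inner_self_nonneg[of k x] by simp
qed

lemma E_norm_eq_sqrt_SUP: "E_norm \<mu> ginv act k = sqrt (SUP x. inner_self k x)"
  unfolding E_norm_def norm_E_inner_self ..

lemma integrable_bounded_by_compact_indicator:
  fixes F :: "'g \<Rightarrow> real"
  assumes "continuous_on UNIV F" "compact T" "\<And>t. \<bar>F t\<bar> \<le> c * indicator T t"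
  shows "integrable \<mu> F" "integral\<^sup>L \<mu> F \<le> c * measure \<mu> T"
proof -
  have bound: "has_bochner_integral \<mu> (\<lambda>t. c * indicator T t) (c * measure \<mu> T)"
    using compact_sets_haar[OF assms(2)] haar_compact_finite[OF assms(2)]
    by (intro has_bochner_integral_mult_right has_bochner_integral_real_indicator) auto
  then have bound_int: "integrable \<mu> (\<lambda>t. c * indicator T t)"
    by (rule integrable.intros)
  have "F \<in> borel_measurable \<mu>"
    by (subst measurable_cong_sets[OF sets_haar refl]) (rule borel_measurable_continuous_onI[OF assms(1)])
  moreover have "norm (F t) \<le> norm (c * indicator T t)" for t
    using assms(3)[of t] by (metis abs_ge_zero order_trans real_norm_def abs_of_nonneg)
  ultimately show F_int: "integrable \<mu> F"
    by (intro Bochner_Integration.integrable_bound[OF bound_int]) auto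
  have "integral\<^sup>L \<mu> F \<le> integral\<^sup>L \<mu> (\<lambda>t. c * indicator T t)"
    by (rule integral_mono[OF F_int bound_int]) (use assms(3) in \<open>metis abs_ge_self order_trans\<close>)
  then show "integral\<^sup>L \<mu> F \<le> c * measure \<mu> T"
    by (simp only: has_bochner_integral_integral_eq[OF bound])
qed

lemma inner_self_le:
  assumes "continuous_on UNIV k" "\<And>y. y \<notin> L \<Longrightarrow> k y = 0" "\<And>y. cmod (k y) \<le> c"
    and "visiting_time_bound L M"
  shows "integrable \<mu> (\<lambda>t. (cmod (k (act (ginv t) x)))\<^sup>2)" "inner_self k x \<le> c\<^sup>2 * M"
proof -
  obtain T where T: "compact T" "{t. act (ginv t) x \<in> L} \<subseteq> T" "measure \<mu> T \<le> M"
    using assms(4) unfolding visiting_time_bound_def by blast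
  have "\<bar>(cmod (k (act (ginv t) x)))\<^sup>2\<bar> \<le> c\<^sup>2 * indicator T t" for t
  proof (cases "t \<in> T")
    case True
    then show ?thesis
      using assms(3)[of "act (ginv t) x"] by (simp add: power_mono)
  next
    case False
    then show ?thesis
      using T(2) assms(2) by auto
  qed
  note bound = integrable_bounded_by_compact_indicator[OF _ T(1) this]
  have cont: "continuous_on UNIV (\<lambda>t. (cmod (k (act (ginv t) x)))\<^sup>2)"
    by (intro continuous_intros continuous_on_compose2[OF assms(1) continuous_on_orbit]) auto
  show "integrable \<mu> (\<lambda>t. (cmod (k (act (ginv t) x)))\<^sup>2)"
    using bound(1)[OF cont] .
  have "c\<^sup>2 * measure \<mu> T \<le> c\<^sup>2 * M"
    using T(3) by (simp add: mult_left_mono)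
  then show "inner_self k x \<le> c\<^sup>2 * M"
    using bound(2)[OF cont] unfolding inner_self_def by simp
qed

lemma E_norm_le:
  assumes "continuous_on UNIV k" "\<And>y. y \<notin> L \<Longrightarrow> k y = 0" "\<And>y. cmod (k y) \<le> c"
    and "visiting_time_bound L M"
  shows "E_norm \<mu> ginv act k \<le> c * sqrt M"
proof -
  have "0 \<le> c"
    using assms(3) norm_ge_zero order_trans by metis
  have "(SUP x. inner_self k x) \<le> c\<^sup>2 * M"
    by (rule cSUP_least) (use inner_self_le[OF assms] in auto)
  then have "E_norm \<mu> ginv act k \<le> sqrt (c\<^sup>2 * M)"
    unfolding E_norm_eq_sqrt_SUP by (rule real_sqrt_le_mono)
  also have "\<dots> = c * sqrt M"
    using \<open>0 \<le> c\<close> by (simp add: real_sqrt_mult)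
  finally show ?thesis .
qed

lemma Cc_on_UNIV_inner_self:
  assumes "k \<in> Cc_on UNIV"
  shows "integrable \<mu> (\<lambda>t. (cmod (k (act (ginv t) x)))\<^sup>2)" "bdd_above (range (inner_self k))"
proof -
  obtain L c where Lc: "continuous_on UNIV k" "compact L" "\<And>y. y \<notin> L \<Longrightarrow> k y = 0"
    "\<And>y. cmod (k y) \<le> c"
    using Cc_on_UNIV_E[OF assms] by blast
  obtain M where M: "visiting_time_bound L M"
    using visiting_time_bound_exists[OF Lc(2)] by blast
  note bound = inner_self_le[OF Lc(1,3,4) M]
  show "integrable \<mu> (\<lambda>t. (cmod (k (act (ginv t) x)))\<^sup>2)"
    by (rule bound(1))
  show "bdd_above (range (inner_self k))"
    using bound(2) by (intro bdd_aboveI[of _ "c\<^sup>2 * M"]) blast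
qed

lemma SUP_inner_self_nonneg:
  assumes "k \<in> Cc_on UNIV"
  shows "0 \<le> (SUP x. inner_self k x)"
  using inner_self_nonneg cSUP_upper[OF UNIV_I Cc_on_UNIV_inner_self(2)[OF assms]] order_trans
  by metis

lemma E_norm_nonneg: "k \<in> Cc_on UNIV \<Longrightarrow> 0 \<le> E_norm \<mu> ginv act k"
  unfolding E_norm_eq_sqrt_SUP using SUP_inner_self_nonneg by simp

lemma E_norm_sq: "k \<in> Cc_on UNIV \<Longrightarrow> (E_norm \<mu> ginv act k)\<^sup>2 = (SUP x. inner_self k x)"
  unfolding E_norm_eq_sqrt_SUP using SUP_inner_self_nonneg by simp

lemma E_norm_diff_sq_le:
  assumes "a \<in> Cc_on UNIV" "b \<in> Cc_on UNIV" "c \<in> Cc_on UNIV"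
  shows "(E_norm \<mu> ginv act (a - c))\<^sup>2
    \<le> 2 * (E_norm \<mu> ginv act (a - b))\<^sup>2 + 2 * (E_norm \<mu> ginv act (b - c))\<^sup>2"
proof -
  have ab: "a - b \<in> Cc_on UNIV" and bc: "b - c \<in> Cc_on UNIV" and ac: "a - c \<in> Cc_on UNIV"
    using assms by (simp_all add: Cc_on_UNIV_diff)
  have "inner_self (a - c) x
      \<le> 2 * (SUP x. inner_self (a - b) x) + 2 * (SUP x. inner_self (b - c) x)" for x
  proof -
    note int = Cc_on_UNIV_inner_self(1)[OF ab, of x] Cc_on_UNIV_inner_self(1)[OF bc, of x]
    have "inner_self (a - c) x \<le> (\<integral>t. 2 * (cmod ((a - b) (act (ginv t) x)))\<^sup>2
        + 2 * (cmod ((b - c) (act (ginv t) x)))\<^sup>2 \<partial>\<mu>)"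
      unfolding inner_self_def
    proof (rule integral_mono[OF Cc_on_UNIV_inner_self(1)[OF ac]])
      show "integrable \<mu> (\<lambda>t. 2 * (cmod ((a - b) (act (ginv t) x)))\<^sup>2
          + 2 * (cmod ((b - c) (act (ginv t) x)))\<^sup>2)"
        using int by simp
      show "(cmod ((a - c) (act (ginv t) x)))\<^sup>2 \<le> 2 * (cmod ((a - b) (act (ginv t) x)))\<^sup>2
          + 2 * (cmod ((b - c) (act (ginv t) x)))\<^sup>2" for t
        using norm_add_sq_le[of "(a - b) (act (ginv t) x)" "(b - c) (act (ginv t) x)"] by simp
    qed
    also have "\<dots> = 2 * inner_self (a - b) x + 2 * inner_self (b - c) x"
      unfolding inner_self_def using int by simp
    also have "\<dots> \<le> 2 * (SUP x. inner_self (a - b) x) + 2 * (SUP x. inner_self (b - c) x)"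
      using cSUP_upper[OF UNIV_I Cc_on_UNIV_inner_self(2)[OF ab]]
        cSUP_upper[OF UNIV_I Cc_on_UNIV_inner_self(2)[OF bc]] by (simp add: add_mono)
    finally show ?thesis .
  qed
  then have "(SUP x. inner_self (a - c) x)
      \<le> 2 * (SUP x. inner_self (a - b) x) + 2 * (SUP x. inner_self (b - c) x)"
    by (intro cSUP_least) auto
  then show ?thesis
    by (simp only: E_norm_sq[OF ab] E_norm_sq[OF bc] E_norm_sq[OF ac])
qed

lemma E_closure_subset_if_approx:
  assumes "S\<^sub>1 \<subseteq> Cc_on UNIV" "S\<^sub>2 \<subseteq> Cc_on UNIV"
    and approx: "\<And>f \<epsilon>. f \<in> S\<^sub>2 \<Longrightarrow> \<epsilon> > 0 \<Longrightarrow> \<exists>h\<in>S\<^sub>1. E_norm \<mu> ginv act (f - h) < \<epsilon>"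
  shows "E_closure \<mu> ginv act S\<^sub>2 \<subseteq> E_closure \<mu> ginv act S\<^sub>1"
proof
  fix g assume g: "g \<in> E_closure \<mu> ginv act S\<^sub>2"
  have "\<exists>h\<in>S\<^sub>1. E_norm \<mu> ginv act (g - h) < \<epsilon>" if "\<epsilon> > 0" for \<epsilon>
  proof -
    have "\<epsilon> / 2 > 0"
      using \<open>\<epsilon> > 0\<close> by simp
    then obtain f where f: "f \<in> S\<^sub>2" "E_norm \<mu> ginv act (g - f) < \<epsilon> / 2"
      using g unfolding E_closure_def by blast
    obtain h where h: "h \<in> S\<^sub>1" "E_norm \<mu> ginv act (f - h) < \<epsilon> / 2"
      using approx[OF f(1) \<open>\<epsilon> / 2 > 0\<close>] by blast
    have Cc: "g \<in> Cc_on UNIV" "f \<in> Cc_on UNIV" "h \<in> Cc_on UNIV"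
      using g f(1) h(1) assms(1,2) unfolding E_closure_def by auto
    have "(E_norm \<mu> ginv act (g - f))\<^sup>2 < (\<epsilon> / 2)\<^sup>2" "(E_norm \<mu> ginv act (f - h))\<^sup>2 < (\<epsilon> / 2)\<^sup>2"
      using f(2) h(2) Cc by (simp_all add: power_strict_mono E_norm_nonneg Cc_on_UNIV_diff)
    moreover have "(E_norm \<mu> ginv act (g - h))\<^sup>2
        \<le> 2 * (E_norm \<mu> ginv act (g - f))\<^sup>2 + 2 * (E_norm \<mu> ginv act (f - h))\<^sup>2"
      using Cc by (rule E_norm_diff_sq_le)
    ultimately have "(E_norm \<mu> ginv act (g - h))\<^sup>2 < \<epsilon>\<^sup>2"
      by (simp add: power_divide)
    then have "E_norm \<mu> ginv act (g - h) < \<epsilon>"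
      using \<open>\<epsilon> > 0\<close> by (simp add: power_less_imp_less_base)
    with h(1) show ?thesis by blast
  qed
  then show "g \<in> E_closure \<mu> ginv act S\<^sub>1"
    using g unfolding E_closure_def by blast
qed

lemma E_norm_approx_by_Cc_on:
  assumes f: "f \<in> Cc_on UNIV \<inter> ext_zero X ` C0_on X" and "\<epsilon> > 0"
  shows "\<exists>h\<in>ext_zero X ` Cc_on X. E_norm \<mu> ginv act (f - h) < \<epsilon>"
proof -
  obtain L c where L: "continuous_on UNIV f" "compact L" "\<And>y. y \<notin> L \<Longrightarrow> f y = 0"
    and "\<And>y. cmod (f y) \<le> c"
    using f Cc_on_UNIV_E by (metis IntD1)
  obtain M where M: "M \<ge> 0" "visiting_time_bound L M"
    using visiting_time_bound_exists[OF L(2)] by blast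
  have "sqrt M + 1 > 0"
    using real_sqrt_ge_zero[OF M(1)] by linarith
  define \<delta> where "\<delta> = \<epsilon> / (sqrt M + 1)"
  have "\<delta> > 0"
    using \<open>\<epsilon> > 0\<close> \<open>sqrt M + 1 > 0\<close> by (simp add: \<delta>_def)
  then obtain H where H: "H \<in> ext_zero X ` Cc_on X" "continuous_on UNIV H"
    "\<And>y. cmod (f y - H y) \<le> \<delta>" "\<And>y. f y = 0 \<Longrightarrow> H y = 0"
    using C0_on_cutoff[OF _ L(1)] f by (metis IntD2)
  have "continuous_on UNIV (f - H)"
    unfolding fun_diff_def using L(1) H(2) by (rule continuous_on_diff)
  moreover have "(f - H) y = 0" if "y \<notin> L" for y
    using L(3)[OF that] H(4) by simp
  ultimately have "E_norm \<mu> ginv act (f - H) \<le> \<delta> * sqrt M"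
    using H(3) M(2) by (intro E_norm_le[where L = L]) auto
  also have "\<dots> < \<epsilon>"
    using \<open>\<epsilon> > 0\<close> \<open>sqrt M + 1 > 0\<close> by (simp add: \<delta>_def field_simps)
  finally show ?thesis
    using H(1) by blast
qed

end

theorem proposition3p1:
  fixes mul :: "'g::topological_space \<Rightarrow> 'g \<Rightarrow> 'g" and ginv :: "'g \<Rightarrow> 'g" and e :: 'g
    and \<mu> :: "'g measure"
    and act :: "'g \<Rightarrow> 'b::topological_space \<Rightarrow> 'b" and X :: "'b set"
  assumes "lch_group mul ginv e"
    and "left_haar_measure mul \<mu>"
    and "Hausdorff_space (top_of_set X)" and "locally_compact_space (top_of_set X)"
    and "global_action mul e act"
    and "open X"
    and "(\<Union>t. act t ` X) = UNIV"
    and "proper_partial ginv act X"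
  shows "E_closure \<mu> ginv act (ext_zero X ` Cc_on X)
       = E_closure \<mu> ginv act (Cc_on UNIV \<inter> ext_zero X ` C0_on X)"
proof -
  interpret proper_restricted_action_haar mul ginv e act X \<mu>
    using assms by unfold_locales
  have Cc_sub: "ext_zero X ` Cc_on X \<subseteq> Cc_on UNIV \<inter> ext_zero X ` C0_on X"
    using ext_zero_Cc_on Cc_on_subset_C0_on by blast
  show ?thesis
  proof
    show "E_closure \<mu> ginv act (ext_zero X ` Cc_on X)
        \<subseteq> E_closure \<mu> ginv act (Cc_on UNIV \<inter> ext_zero X ` C0_on X)"
      using Cc_sub by (rule E_closure_mono)
    show "E_closure \<mu> ginv act (Cc_on UNIV \<inter> ext_zero X ` C0_on X)
        \<subseteq> E_closure \<mu> ginv act (ext_zero X ` Cc_on X)"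
    proof (rule E_closure_subset_if_approx)
      show "ext_zero X ` Cc_on X \<subseteq> Cc_on UNIV" "Cc_on UNIV \<inter> ext_zero X ` C0_on X \<subseteq> Cc_on UNIV"
        using Cc_sub by blast+
    qed (rule E_norm_approx_by_Cc_on)
  qed
qed

end
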